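(* Let $\mathbf{s}, \mathbf{n} \in \mathbb{R}^T$, let $\mathbf{y} = \mathbf{s} + \mathbf{n}$, and let $\widehat{\mathbf{s}} \in \mathbb{R}^T$ be any vector (the enhanced signal). Let $\omega_{\text{obs}} > 0$ and set $\overline{\mathbf{s}} = \widehat{\mathbf{s}} + \omega_{\text{obs}}\mathbf{y}$. Assume $\mathbf{P}_{\mathbf{s},\mathbf{n}}\widehat{\mathbf{s}} \neq \mathbf{0}$ and $\widehat{\mathbf{s}} - \mathbf{P}_{\mathbf{s},\mathbf{n}}\widehat{\mathbf{s}} \neq \mathbf{0}$. If $\langle \widehat{\mathbf{s}}, \mathbf{y} \rangle > 0$, then $\mathrm{SAR}(\overline{\mathbf{s}}) > \mathrm{SAR}(\widehat{\mathbf{s}})$.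
   Context: Fix an integer $L \ge 1$. For a vector $\mathbf{x} \in \mathbb{R}^T$ and $0 \le \tau \le L-1$, let $\mathbf{x}^{\tau}$ denote $\mathbf{x}$ delayed by $\tau$ samples, i.e. $(\mathbf{x}^{\tau})_t = x_{t-\tau}$ for $t > \tau$ and $0$ otherwise. Let $\mathbf{A}_{\mathbf{s},\mathbf{n}} = [\mathbf{s}^{0},\dots,\mathbf{s}^{L-1},\mathbf{n}^{0},\dots,\mathbf{n}^{L-1}] \in \mathbb{R}^{T\times 2L}$, assumed to have full column rank, and let $\mathbf{P}_{\mathbf{s},\mathbf{n}} = \mathbf{A}_{\mathbf{s},\mathbf{n}}(\mathbf{A}_{\mathbf{s},\mathbf{n}}^{\mathsf T}\mathbf{A}_{\mathbf{s},\mathbf{n}})^{-1}\mathbf{A}_{\mathbf{s},\mathbf{n}}^{\mathsf T}$ be the orthogonal projection onto the span of these delayed signals. For an estimate $\mathbf{z} \in \mathbb{R}^T$, define the artifact error $\mathbf{e}_{\text{artif}}(\mathbf{z}) = \mathbf{z} - \mathbf{P}_{\mathbf{s},\mathbf{n}}\mathbf{z}$ and the signal-to-artifact ratio $\mathrm{SAR}(\mathbf{z}) = 10\log_{10}\frac{\|\mathbf{P}_{\mathbf{s},\mathbf{n}}\mathbf{z}\|^2}{\|\mathbf{e}_{\text{artif}}(\mathbf{z})\|^2}$ (equivalently $\|\mathbf{s}_{\text{target}}+\mathbf{e}_{\text{noise}}\|^2/\|\mathbf{e}_{\text{artif}}\|^2$ in the decomposition $\mathbf{z} = \mathbf{P}_{\mathbf{s}}\mathbf{z}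 + (\mathbf{P}_{\mathbf{s},\mathbf{n}}-\mathbf{P}_{\mathbf{s}})\mathbf{z} + \mathbf{e}_{\text{artif}}(\mathbf{z})$). Here $\langle\cdot,\cdot\rangle$ is the Euclidean inner product. *)

theory Defs
  imports Complex_Main
begin

text \<open>Vectors in R^T are represented as functions nat => real; only the
  entries with index t < T (0-based indices 0..T-1) are relevant.\<close>

definition ip :: "nat \<Rightarrow> (nat \<Rightarrow> real) \<Rightarrow> (nat \<Rightarrow> real) \<Rightarrow> real" where
  "ip T x y = (\<Sum>t<T. x t * y t)"

definition sqnorm :: "nat \<Rightarrow> (nat \<Rightarrow> real) \<Rightarrow> real" where
  "sqnorm T x = ip T x x"

definition delay :: "(nat \<Rightarrow> real) \<Rightarrow> nat \<Rightarrow> nat \<Rightarrow> real" where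
  "delay x tau = (\<lambda>t. if tau \<le> t then x (t - tau) else 0)"

text \<open>Column space of A_{s,n} = [s^0..s^(L-1), n^0..n^(L-1)], as vectors in R^T.\<close>
definition colspace :: "nat \<Rightarrow> nat \<Rightarrow> (nat \<Rightarrow> real) \<Rightarrow> (nat \<Rightarrow> real) \<Rightarrow> (nat \<Rightarrow> real) set" where
  "colspace T L s n = {(\<lambda>t. if t < T then (\<Sum>j<L. a j * delay s j t + b j * delay n j t) else 0)
                         | a b. True}"

definition full_col_rank :: "nat \<Rightarrow> nat \<Rightarrow> (nat \<Rightarrow> real) \<Rightarrow> (nat \<Rightarrow> real) \<Rightarrow> bool" where
  "full_col_rank T L s n \<longleftrightarrow>
     (\<forall>a b. (\<forall>t<T. (\<Sum>j<L. a j * delay s j t + b j * delay n j t) = 0)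
            \<longrightarrow> (\<forall>j<L. a j = 0 \<and> b j = 0))"

definition proj :: "nat \<Rightarrow> nat \<Rightarrow> (nat \<Rightarrow> real) \<Rightarrow> (nat \<Rightarrow> real) \<Rightarrow> (nat \<Rightarrow> real) \<Rightarrow> (nat \<Rightarrow> real)" where
  "proj T L s n z = (THE w. w \<in> colspace T L s n \<and>
      (\<forall>j<L. ip T (\<lambda>t. z t - w t) (delay s j) = 0 \<and> ip T (\<lambda>t. z t - w t) (delay n j) = 0))"

definition e_artif :: "nat \<Rightarrow> nat \<Rightarrow> (nat \<Rightarrow> real) \<Rightarrow> (nat \<Rightarrow> real) \<Rightarrow> (nat \<Rightarrow> real) \<Rightarrow> (nat \<Rightarrow> real)" where
  "e_artif T L s n z = (\<lambda>t. z t - proj T L s n z t)"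

definition SAR :: "nat \<Rightarrow> nat \<Rightarrow> (nat \<Rightarrow> real) \<Rightarrow> (nat \<Rightarrow> real) \<Rightarrow> (nat \<Rightarrow> real) \<Rightarrow> real" where
  "SAR T L s n z = 10 * log 10 (sqnorm T (proj T L s n z) / sqnorm T (e_artif T L s n z))"

definition nonzero_vec :: "nat \<Rightarrow> (nat \<Rightarrow> real) \<Rightarrow> bool" where
  "nonzero_vec T x \<longleftrightarrow> (\<exists>t<T. x t \<noteq> 0)"

end

theory Submission
  imports Defs
begin

text \<open>Adding a multiple of the observation \<open>y = s + n\<close>, which lies in the span of the
  undelayed columns, shifts the projection by the same multiple and leaves the artifact
  error unchanged. Since \<open>\<widehat>s - P \<widehat>s\<close> is orthogonal to \<open>y\<close>, we have
  \<open>\<langle>P \<widehat>s, y\<rangle> = \<langle>\<widehat>s, y\<rangle> > 0\<close>, so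
  \<open>\<parallel>P \<widehat>s + \<omega> y\<parallel>\<^sup>2 = \<parallel>P \<widehat>s\<parallel>\<^sup>2 + 2\<omega>\<langle>P \<widehat>s, y\<rangle> + \<omega>\<^sup>2\<parallel>y\<parallel>\<^sup>2\<close> strictly increases
  while the denominator of the SAR stays fixed.\<close>

lemma ip_add_left: "ip T (\<lambda>t. x t + y t) u = ip T x u + ip T y u"
  by (simp add: ip_def sum.distrib algebra_simps)

lemma ip_diff_left: "ip T (\<lambda>t. x t - y t) u = ip T x u - ip T y u"
  by (simp add: ip_def sum_subtractf algebra_simps)

lemma ip_scale_left: "ip T (\<lambda>t. c * x t) u = c * ip T x u"
  by (simp add: ip_def sum_distrib_left algebra_simps)

lemma ip_commute: "ip T x y = ip T y x"
  by (simp add: ip_def mult.commute)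

lemma ip_cong:
  "(\<And>t. t < T \<Longrightarrow> x t = x' t) \<Longrightarrow> (\<And>t. t < T \<Longrightarrow> y t = y' t) \<Longrightarrow> ip T x y = ip T x' y'"
  by (simp add: ip_def)

lemma ip_self_nonneg: "ip T x x \<ge> 0"
  by (simp add: ip_def sum_nonneg)

lemma ip_self_eq_0D: "ip T x x = 0 \<Longrightarrow> t < T \<Longrightarrow> x t = 0"
  unfolding ip_def by (subst (asm) sum_nonneg_eq_0_iff) auto

lemma ip_remove_component: "ip T (\<lambda>t. x t - ip T x r / ip T r r * r t) r = 0"
proof (cases "ip T r r = 0")
  case True
  then show ?thesis
    using ip_self_eq_0D[OF True] by (simp add: ip_def)
next
  case False
  then show ?thesis
    by (simp only: ip_diff_left ip_scale_left) simp
qed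

lemma sqnorm_pos: "nonzero_vec T x \<Longrightarrow> sqnorm T x > 0"
  unfolding nonzero_vec_def sqnorm_def
  using ip_self_nonneg[of T x] ip_self_eq_0D[of T x] by force

lemma sqnorm_add_scaled_gt:
  assumes "ip T x y > 0" and "c > 0"
  shows "sqnorm T (\<lambda>t. x t + c * y t) > sqnorm T x"
proof -
  have "sqnorm T (\<lambda>t. x t + c * y t) = sqnorm T x + 2 * c * ip T x y + c\<^sup>2 * ip T y y"
    by (simp add: sqnorm_def ip_def sum.distrib sum_distrib_left algebra_simps power2_eq_square)
  moreover have "c\<^sup>2 * ip T y y \<ge> 0"
    by (simp add: ip_self_nonneg)
  ultimately show ?thesis
    using assms by (smt (verit) mult_pos_pos)
qed

definition trunc :: "nat \<Rightarrow> (nat \<Rightarrow> real) \<Rightarrow> nat \<Rightarrow> real" where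
  "trunc T v = (\<lambda>t. if t < T then v t else 0)"

definition is_proj :: "nat \<Rightarrow> (nat \<Rightarrow> real) set \<Rightarrow> (nat \<Rightarrow> real) \<Rightarrow> (nat \<Rightarrow> real) \<Rightarrow> bool" where
  "is_proj T S z w \<longleftrightarrow> w \<in> S \<and> (\<forall>u\<in>S. ip T (\<lambda>t. z t - w t) u = 0)"

definition has_proj :: "nat \<Rightarrow> (nat \<Rightarrow> real) set \<Rightarrow> bool" where
  "has_proj T S \<longleftrightarrow> (\<forall>z. \<exists>w. is_proj T S z w)"

definition lin_closed :: "(nat \<Rightarrow> real) set \<Rightarrow> bool" where
  "lin_closed S \<longleftrightarrow> (\<forall>w1\<in>S. \<forall>w2\<in>S. \<forall>c. (\<lambda>t. w1 t + c * w2 t) \<in> S)"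

definition extend :: "nat \<Rightarrow> (nat \<Rightarrow> real) set \<Rightarrow> (nat \<Rightarrow> real) \<Rightarrow> (nat \<Rightarrow> real) set" where
  "extend T S v = {\<lambda>t. w t + c * trunc T v t | w c. w \<in> S}"

lemma ip_trunc_right: "ip T x (trunc T v) = ip T x v"
  by (rule ip_cong) (auto simp: trunc_def)

lemma lin_closedD: "lin_closed S \<Longrightarrow> w1 \<in> S \<Longrightarrow> w2 \<in> S \<Longrightarrow> (\<lambda>t. w1 t + c * w2 t) \<in> S"
  unfolding lin_closed_def by blast

lemma extendI: "w \<in> S \<Longrightarrow> (\<lambda>t. w t + c * trunc T v t) \<in> extend T S v"
  unfolding extend_def by blast

lemma lin_closed_extend:
  assumes "lin_closed S"
  shows "lin_closed (extend T S v)"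
  unfolding lin_closed_def
proof (intro ballI allI)
  fix u1 u2 c
  assume "u1 \<in> extend T S v" "u2 \<in> extend T S v"
  then obtain w1 c1 w2 c2 where w: "w1 \<in> S" "w2 \<in> S"
    and u: "u1 = (\<lambda>t. w1 t + c1 * trunc T v t)" "u2 = (\<lambda>t. w2 t + c2 * trunc T v t)"
    unfolding extend_def by auto
  have "(\<lambda>t. w1 t + c * w2 t) \<in> S"
    using assms w by (rule lin_closedD)
  from extendI[OF this, of "c1 + c * c2" T v]
  show "(\<lambda>t. u1 t + c * u2 t) \<in> extend T S v"
    by (simp add: u algebra_simps)
qed

lemma orthogonal_extend:
  assumes "\<forall>w\<in>S. ip T x w = 0" and "ip T x (trunc T v) = 0" and "u \<in> extend T S v"
  shows "ip T x u = 0"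
proof -
  obtain w c where "w \<in> S" and "u = (\<lambda>t. w t + c * trunc T v t)"
    using assms(3) unfolding extend_def by auto
  with assms(1,2) show ?thesis
    by (simp add: ip_commute[of T x] ip_add_left ip_scale_left)
qed

text \<open>One Gram--Schmidt step: correct the projection onto \<open>S\<close> along the component of
  \<open>v\<close> orthogonal to \<open>S\<close>.\<close>

lemma has_proj_extend:
  assumes "lin_closed S" and "has_proj T S"
  shows "has_proj T (extend T S v)"
  unfolding has_proj_def
proof
  fix z
  obtain w0 where w0: "is_proj T S z w0"
    using assms(2) unfolding has_proj_def by blast
  obtain pv where pv: "is_proj T S v pv"
    using assms(2) unfolding has_proj_def by blast
  define r where "r = (\<lambda>t. trunc T v t - pv t)"
  define c where "c = ip T (\<lambda>t. z t - w0 t) r / ip T r r"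
  define w where "w = (\<lambda>t. (\<lambda>t. w0 t + (- c) * pv t) t + c * trunc T v t)"
  define x where "x = (\<lambda>t. z t - w t)"
  have r_orth: "ip T r u = 0" if "u \<in> S" for u
  proof -
    have "ip T r u = ip T (\<lambda>t. v t - pv t) u"
      unfolding r_def by (rule ip_cong) (auto simp: trunc_def)
    with pv that show ?thesis
      unfolding is_proj_def by simp
  qed
  have x_eq: "x = (\<lambda>t. (z t - w0 t) - c * r t)"
    unfolding x_def w_def r_def by (auto simp: algebra_simps)
  have x_orth_S: "ip T x u = 0" if "u \<in> S" for u
    using w0 that r_orth[OF that]
    by (simp add: x_eq ip_diff_left ip_scale_left is_proj_def)
  have x_orth_r: "ip T x r = 0"
    unfolding x_eq c_def by (rule ip_remove_component)
  have x_orth_v: "ip T x (trunc T v) = 0"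
  proof -
    have "trunc T v = (\<lambda>t. r t + pv t)"
      unfolding r_def by simp
    then show ?thesis
      using x_orth_r x_orth_S pv
      by (simp add: ip_commute[of T x] ip_add_left is_proj_def)
  qed
  have "(\<lambda>t. w0 t + (- c) * pv t) \<in> S"
    using w0 pv by (intro lin_closedD[OF assms(1)]) (simp_all add: is_proj_def)
  then have "w \<in> extend T S v"
    unfolding w_def by (rule extendI)
  moreover have "\<forall>u\<in>extend T S v. ip T x u = 0"
    using x_orth_S x_orth_v by (blast intro: orthogonal_extend)
  ultimately show "\<exists>w. is_proj T (extend T S v) z w"
    unfolding is_proj_def x_def by blast
qed

lemma is_proj_unique:
  assumes "is_proj T S z w1" and "is_proj T S z w2" and "t < T"
  shows "w1 t = w2 t"
proof -
  define d where "d = (\<lambda>t. w1 t - w2 t)"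
  have d_orth: "ip T d u = 0" if "u \<in> S" for u
  proof -
    have "d = (\<lambda>t. (z t - w2 t) - (z t - w1 t))"
      unfolding d_def by simp
    then show ?thesis
      using assms(1,2) that by (simp add: ip_diff_left is_proj_def)
  qed
  have "ip T d d = ip T w1 d - ip T w2 d"
    unfolding d_def by (rule ip_diff_left)
  also have "\<dots> = 0"
    using assms(1,2) d_orth ip_commute[of T _ d] by (simp add: is_proj_def)
  finally show ?thesis
    using ip_self_eq_0D assms(3) unfolding d_def by fastforce
qed

lemma is_proj_add:
  assumes "is_proj T S z w" and "lin_closed S" and "u \<in> S"
    and "\<And>t. t < T \<Longrightarrow> z' t = z t + c * u t"
  shows "is_proj T S z' (\<lambda>t. w t + c * u t)"
proof -
  have "ip T (\<lambda>t. z' t - (w t + c * u t)) v = ip T (\<lambda>t. z t - w t) v" for v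
    using assms(4) by (intro ip_cong) auto
  then show ?thesis
    using assms(1-3) lin_closedD by (simp add: is_proj_def)
qed

lemma colspaceI:
  "(\<lambda>t. if t < T then (\<Sum>j<L. a j * delay s j t + b j * delay n j t) else 0) \<in> colspace T L s n"
  unfolding colspace_def by blast

lemma colspace_0: "colspace T 0 s n = {\<lambda>t. 0}"
  unfolding colspace_def by (auto cong: if_cong)

lemma colspace_Suc:
  "colspace T (Suc m) s n = extend T (extend T (colspace T m s n) (delay s m)) (delay n m)"
proof (intro set_eqI iffI)
  fix u
  assume "u \<in> colspace T (Suc m) s n"
  then obtain a b where u: "u = (\<lambda>t. if t < T then (\<Sum>j<Suc m. a j * delay s j t + b j * delay n j t) else 0)"
    unfolding colspace_def by auto
  define w where "w = (\<lambda>t. if t < T then (\<Sum>j<m. a j * delay s j t + b j * delay n j t) else 0)"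
  have "w \<in> colspace T m s n"
    unfolding w_def by (rule colspaceI)
  then have "(\<lambda>t. (\<lambda>t. w t + a m * trunc T (delay s m) t) t + b m * trunc T (delay n m) t)
      \<in> extend T (extend T (colspace T m s n) (delay s m)) (delay n m)"
    by (intro extendI)
  moreover have "u = (\<lambda>t. (\<lambda>t. w t + a m * trunc T (delay s m) t) t + b m * trunc T (delay n m) t)"
    unfolding u w_def trunc_def by (auto simp: algebra_simps)
  ultimately show "u \<in> extend T (extend T (colspace T m s n) (delay s m)) (delay n m)"
    by simp
next
  fix u
  assume "u \<in> extend T (extend T (colspace T m s n) (delay s m)) (delay n m)"
  then obtain c1 c2 a b where u: "u = (\<lambda>t. (if t < T then (\<Sum>j<m. a j * delay s j t + b j * delay n j t) else 0)
      + c1 * trunc T (delay s m) t + c2 * trunc T (delay n m) t)"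
    unfolding extend_def colspace_def by auto
  have "(\<Sum>j<m. (a(m := c1)) j * delay s j t + (b(m := c2)) j * delay n j t)
      = (\<Sum>j<m. a j * delay s j t + b j * delay n j t)" for t
    by (rule sum.cong) auto
  then have "u = (\<lambda>t. if t < T then (\<Sum>j<Suc m. (a(m := c1)) j * delay s j t + (b(m := c2)) j * delay n j t) else 0)"
    unfolding u trunc_def by (auto simp: algebra_simps)
  then show "u \<in> colspace T (Suc m) s n"
    by (simp add: colspaceI)
qed

lemma colspace_lin_closed_has_proj: "lin_closed (colspace T m s n) \<and> has_proj T (colspace T m s n)"
proof (induction m)
  case 0
  show ?case
    by (auto simp: colspace_0 lin_closed_def has_proj_def is_proj_def ip_def)
next
  case (Suc m)
  then show ?case
    by (simp add: colspace_Suc lin_closed_extend has_proj_extend)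
qed

lemma trunc_delay_in_colspace:
  assumes "j < L"
  shows "trunc T (delay s j) \<in> colspace T L s n" and "trunc T (delay n j) \<in> colspace T L s n"
proof -
  let ?e = "\<lambda>i. if i = j then 1 else 0 :: real"
  have "trunc T (delay s j) = (\<lambda>t. if t < T then (\<Sum>i<L. ?e i * delay s i t + 0 * delay n i t) else 0)"
    and "trunc T (delay n j) = (\<lambda>t. if t < T then (\<Sum>i<L. 0 * delay s i t + ?e i * delay n i t) else 0)"
    using assms by (auto simp: trunc_def if_distrib[of "\<lambda>x. x * _"] cong: if_cong)
  then show "trunc T (delay s j) \<in> colspace T L s n" and "trunc T (delay n j) \<in> colspace T L s n"
    using colspaceI[where a = ?e and b = "\<lambda>_. 0"] colspaceI[where a = "\<lambda>_. 0" and b = ?e] by simp_all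
qed

lemma ip_colspace_eq_0:
  assumes "u \<in> colspace T L s n"
    and "\<forall>j<L. ip T x (delay s j) = 0 \<and> ip T x (delay n j) = 0"
  shows "ip T x u = 0"
proof -
  obtain a b where u: "u = (\<lambda>t. if t < T then (\<Sum>j<L. a j * delay s j t + b j * delay n j t) else 0)"
    using assms(1) unfolding colspace_def by auto
  have "ip T x u = (\<Sum>t<T. x t * (\<Sum>j<L. a j * delay s j t + b j * delay n j t))"
    unfolding ip_def u by simp
  also have "\<dots> = (\<Sum>j<L. a j * ip T x (delay s j) + b j * ip T x (delay n j))"
    unfolding ip_def
    by (simp add: sum_distrib_left sum_distrib_right sum.distrib algebra_simps sum.swap[of _ "{..<T}"])
  also have "\<dots> = 0"
    using assms(2) by simp
  finally show ?thesis .
qed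

lemma orthogonal_colspace_iff:
  "(\<forall>u\<in>colspace T L s n. ip T x u = 0) \<longleftrightarrow> (\<forall>j<L. ip T x (delay s j) = 0 \<and> ip T x (delay n j) = 0)"
  using trunc_delay_in_colspace ip_colspace_eq_0 by (metis ip_trunc_right)

lemma is_proj_colspace_iff:
  "is_proj T (colspace T L s n) z w \<longleftrightarrow> w \<in> colspace T L s n \<and>
     (\<forall>j<L. ip T (\<lambda>t. z t - w t) (delay s j) = 0 \<and> ip T (\<lambda>t. z t - w t) (delay n j) = 0)"
  unfolding is_proj_def orthogonal_colspace_iff ..

lemma proj_eqI:
  assumes "is_proj T (colspace T L s n) z w"
  shows "proj T L s n z = w"
proof -
  have unique: "w' = w" if w': "is_proj T (colspace T L s n) z w'" for w'
  proof
    fix t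
    show "w' t = w t"
    proof (cases "t < T")
      case True
      then show ?thesis
        by (rule is_proj_unique[OF w' assms])
    next
      case False
      then show ?thesis
        using w' assms by (auto simp: is_proj_def colspace_def)
    qed
  qed
  show ?thesis
    unfolding proj_def is_proj_colspace_iff[symmetric] using assms unique by (rule the_equality)
qed

lemma is_proj_proj: "is_proj T (colspace T L s n) z (proj T L s n z)"
  using colspace_lin_closed_has_proj[of T L s n] proj_eqI
  unfolding has_proj_def by metis

lemma trunc_observation_in_colspace:
  assumes "L \<ge> 1"
  shows "trunc T (\<lambda>t. s t + n t) \<in> colspace T L s n"
proof -
  have "trunc T (\<lambda>t. s t + n t) = (\<lambda>t. trunc T (delay s 0) t + 1 * trunc T (delay n 0) t)"
    by (auto simp: trunc_def delay_def)
  also have "\<dots> \<in> colspace T L s n"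
    using assms colspace_lin_closed_has_proj
    by (intro lin_closedD trunc_delay_in_colspace) auto
  finally show ?thesis .
qed

theorem proposition1:
  fixes T L :: nat and s n shat :: "nat \<Rightarrow> real" and w_obs :: real
  assumes "L \<ge> 1"
    and "full_col_rank T L s n"
    and "w_obs > 0"
    and "nonzero_vec T (proj T L s n shat)"
    and "nonzero_vec T (e_artif T L s n shat)"
    and "ip T shat (\<lambda>t. s t + n t) > 0"
  shows "SAR T L s n (\<lambda>t. shat t + w_obs * (s t + n t)) > SAR T L s n shat"
proof -
  define p where "p = proj T L s n shat"
  define y where "y = trunc T (\<lambda>t. s t + n t)"
  define sbar where "sbar = (\<lambda>t. shat t + w_obs * (s t + n t))"
  have y: "y \<in> colspace T L s n"
    unfolding y_def using assms(1) by (rule trunc_observation_in_colspace)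
  have p: "is_proj T (colspace T L s n) shat p"
    unfolding p_def by (rule is_proj_proj)
  have proj_sbar: "proj T L s n sbar = (\<lambda>t. p t + w_obs * y t)"
    using is_proj_add[OF p _ y] colspace_lin_closed_has_proj
    by (intro proj_eqI) (simp add: sbar_def y_def trunc_def)
  have same_artifact: "sqnorm T (e_artif T L s n sbar) = sqnorm T (e_artif T L s n shat)"
    unfolding sqnorm_def e_artif_def proj_sbar p_def[symmetric]
    by (rule ip_cong) (auto simp: sbar_def y_def trunc_def algebra_simps)
  have "ip T shat y = ip T p y"
    using p y by (simp add: is_proj_def ip_diff_left)
  with assms(6) have "ip T p y > 0"
    by (simp add: y_def ip_trunc_right)
  then have "sqnorm T (proj T L s n sbar) > sqnorm T p"
    unfolding proj_sbar using assms(3) by (rule sqnorm_add_scaled_gt)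
  moreover have "sqnorm T p > 0" and "sqnorm T (e_artif T L s n shat) > 0"
    using assms(4,5) by (simp_all add: p_def sqnorm_pos)
  ultimately show ?thesis
    unfolding SAR_def sbar_def[symmetric] same_artifact p_def[symmetric]
    by (simp add: divide_strict_right_mono)
qed

end
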